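(* Let $\mathcal{T}$ be a tangle of order $k$ in a connectivity system $(E,\lambda)$, and let $\mathcal{S}$ be a tree compatible set. If $(R,G)$ is a $(k,\mathcal{S})$-separation, then there is an $\mathcal{S}$-tight $\mathcal{S}$-maximal $k$-flower in $\mathcal{T}$ that displays a $(k,\mathcal{S})$-separation that is $\mathcal{T}$-equivalent to $(R,G)$.
   Context: A connectivity system is a pair $(E,\lambda)$ with $E$ finite and $\lambda$ integer-valued, symmetric and submodular on subsets of $E$. $X$ is $k$-separating if $\lambda(X)\le k$; a $k$-separation is an unordered partition $(X,E-X)$ with $\lambda(X)\le k$. A tangle of order $k$ is a collection $\mathcal T$ of subsets of $E$ with (T1) $\lambda(A)<k$ for $A\in\mathcal T$; (T2) if $\lambda(A)\le k-1$ then $A$ or $E-A$ is in $\mathcal T$; (T3) $A\cup B\cup C\ne E$ for $A,B,C\in\mathcal T$; (T4) $E-\{e\}\notin\mathcal T$. A set is $\mathcal T$-weak if contained in a member of $\mathcal T$, otherwise $\mathcal T$-strong; partitions/$k$-separations are $\mathcal T$-strong if all parts are. A $\mathcal T$-strong $k$-separating $X$ is fully closed if $X\cup Y$ is not $k$-separating for every nonempty $\mathcal T$-weak $Y\subseteq E-X$; $\mathrm{fcl}_{\mathcal T}(X)$ is the intersection of all fully closed $k$-separating sets containing $X$. $\mathcal T$-strong $k$-separations $(X,Y),(X',Y')$ are $\mathcal T$-equivalent if $\{\mathrm{fcl}_{\mathcal T}(X),\mathrm{fcl}_{\mathcal T}(Y)\}=\{\mathrm{fcl}_{\mathcal T}(X'),\mathrm{fcl}_{\mathcal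 T}(Y')\}$. $X$ is $\mathcal T$-sequential if it is $k$-separating, $E-X$ is $\mathcal T$-strong and $\mathrm{fcl}_{\mathcal T}(E-X)=E$. $\mathcal S$ is a set of non-$\mathcal T$-sequential $k$-separating sets with $\mathcal T$-strong complements; a $(k,\mathcal S)$-separation is a $k$-separation $(X,E-X)$ with $X,E-X\in\mathcal S$; $\mathcal S$ is tree compatible if (S1) any $\mathcal T$-strong $k$-separation $\mathcal T$-equivalent to a $(k,\mathcal S)$-separation is one, and (S2) $X\in\mathcal S$, $(Y,E-Y)$ a $\mathcal T$-strong $k$-separation and $X\subseteq Y$ imply $Y\in\mathcal S$. A $k$-flower in $\mathcal T$ is a $\mathcal T$-strong partition $(P_1,\dots,P_n)$ of $E$ ($n\ge1$) with $P_i$ and $P_i\cup P_{i+1}$ $k$-separating for all $i$ (mod $n$); it displays $(X,E-X)$ if $X$ is a union of petals. $\Phi_1\preccurlyeq_{\mathcal S}\Phi_2$ if each $(k,\mathcal S)$-separation displayed by $\Phi_1$ is $\mathcal T$-equivalent to some $(k,\mathcal S)$-separation displayed by $\Phi_2$; equivalence means both directions; $\Phi$ is $\mathcal S$-tight if not equivalent to a $k$-flower with fewer petals, and $\mathcal S$-maximal if $\Phi\preccurlyeq_{\mathcal S}\Phi'$ implies $\Phi'\preccurlyeq_{\mathcal S}\Phi$. *)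

theory Defs
  imports Main
begin

definition connectivity_system :: "'a set \<Rightarrow> ('a set \<Rightarrow> int) \<Rightarrow> bool" where
  "connectivity_system E lam \<longleftrightarrow> finite E
     \<and> (\<forall>X. X \<subseteq> E \<longrightarrow> lam X = lam (E - X))
     \<and> (\<forall>X Y. X \<subseteq> E \<longrightarrow> Y \<subseteq> E \<longrightarrow> lam (X \<union> Y) + lam (X \<inter> Y) \<le> lam X + lam Y)"

definition k_separating :: "('a set \<Rightarrow> int) \<Rightarrow> int \<Rightarrow> 'a set \<Rightarrow> bool" where
  "k_separating lam k X \<longleftrightarrow> lam X \<le> k"

definition tangle :: "'a set \<Rightarrow> ('a set \<Rightarrow> int) \<Rightarrow> int \<Rightarrow> 'a set set \<Rightarrow> bool" where
  "tangle E lam k T \<longleftrightarrow>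
     (\<forall>A\<in>T. A \<subseteq> E \<and> lam A < k)
   \<and> (\<forall>A. A \<subseteq> E \<longrightarrow> lam A \<le> k - 1 \<longrightarrow> A \<in> T \<or> E - A \<in> T)
   \<and> (\<forall>A\<in>T. \<forall>B\<in>T. \<forall>C\<in>T. A \<union> B \<union> C \<noteq> E)
   \<and> (\<forall>e\<in>E. E - {e} \<notin> T)"

definition T_weak :: "'a set set \<Rightarrow> 'a set \<Rightarrow> bool" where
  "T_weak T Y \<longleftrightarrow> (\<exists>A\<in>T. Y \<subseteq> A)"

definition T_strong :: "'a set set \<Rightarrow> 'a set \<Rightarrow> bool" where
  "T_strong T Y \<longleftrightarrow> \<not> T_weak T Y"

text \<open>A T-strong k-separation (X, E - X), represented by the side X.\<close>
definition strong_k_sep :: "'a set \<Rightarrow> ('a set \<Rightarrow> int) \<Rightarrow> int \<Rightarrow> 'a set set \<Rightarrow> 'a set \<Rightarrow> bool" where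
  "strong_k_sep E lam k T X \<longleftrightarrow> X \<subseteq> E \<and> k_separating lam k X
     \<and> T_strong T X \<and> T_strong T (E - X)"

definition fully_closed :: "'a set \<Rightarrow> ('a set \<Rightarrow> int) \<Rightarrow> int \<Rightarrow> 'a set set \<Rightarrow> 'a set \<Rightarrow> bool" where
  "fully_closed E lam k T X \<longleftrightarrow> X \<subseteq> E \<and> T_strong T X \<and> k_separating lam k X
     \<and> (\<forall>Y. Y \<subseteq> E - X \<longrightarrow> Y \<noteq> {} \<longrightarrow> T_weak T Y \<longrightarrow> \<not> k_separating lam k (X \<union> Y))"

definition fcl :: "'a set \<Rightarrow> ('a set \<Rightarrow> int) \<Rightarrow> int \<Rightarrow> 'a set set \<Rightarrow> 'a set \<Rightarrow> 'a set" where
  "fcl E lam k T X = E \<inter> \<Inter> {Z. fully_closed E lam k T Z \<and> X \<subseteq> Z}"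

definition T_equiv :: "'a set \<Rightarrow> ('a set \<Rightarrow> int) \<Rightarrow> int \<Rightarrow> 'a set set \<Rightarrow> 'a set \<Rightarrow> 'a set \<Rightarrow> bool" where
  "T_equiv E lam k T X X' \<longleftrightarrow>
     {fcl E lam k T X, fcl E lam k T (E - X)} = {fcl E lam k T X', fcl E lam k T (E - X')}"

definition T_sequential :: "'a set \<Rightarrow> ('a set \<Rightarrow> int) \<Rightarrow> int \<Rightarrow> 'a set set \<Rightarrow> 'a set \<Rightarrow> bool" where
  "T_sequential E lam k T X \<longleftrightarrow> X \<subseteq> E \<and> k_separating lam k X \<and> T_strong T (E - X)
     \<and> fcl E lam k T (E - X) = E"

definition admissible_S :: "'a set \<Rightarrow> ('a set \<Rightarrow> int) \<Rightarrow> int \<Rightarrow> 'a set set \<Rightarrow> 'a set set \<Rightarrow> bool" where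
  "admissible_S E lam k T S \<longleftrightarrow> (\<forall>X\<in>S. X \<subseteq> E \<and> k_separating lam k X
     \<and> \<not> T_sequential E lam k T X \<and> T_strong T (E - X))"

text \<open>(k,S)-separation (X, E - X), represented by X.\<close>
definition kS_sep :: "'a set \<Rightarrow> ('a set \<Rightarrow> int) \<Rightarrow> int \<Rightarrow> 'a set set \<Rightarrow> 'a set \<Rightarrow> bool" where
  "kS_sep E lam k S X \<longleftrightarrow> X \<subseteq> E \<and> k_separating lam k X \<and> X \<in> S \<and> E - X \<in> S"

definition tree_compatible :: "'a set \<Rightarrow> ('a set \<Rightarrow> int) \<Rightarrow> int \<Rightarrow> 'a set set \<Rightarrow> 'a set set \<Rightarrow> bool" where
  "tree_compatible E lam k T S \<longleftrightarrow> admissible_S E lam k T S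
   \<and> (\<forall>X X'. kS_sep E lam k S X \<longrightarrow> strong_k_sep E lam k T X' \<longrightarrow> T_equiv E lam k T X X'
          \<longrightarrow> kS_sep E lam k S X')
   \<and> (\<forall>X Y. X \<in> S \<longrightarrow> strong_k_sep E lam k T Y \<longrightarrow> X \<subseteq> Y \<longrightarrow> Y \<in> S)"

definition k_flower :: "'a set \<Rightarrow> ('a set \<Rightarrow> int) \<Rightarrow> int \<Rightarrow> 'a set set \<Rightarrow> 'a set list \<Rightarrow> bool" where
  "k_flower E lam k T P \<longleftrightarrow> length P \<ge> 1
   \<and> (\<forall>i<length P. P ! i \<noteq> {} \<and> T_strong T (P ! i))
   \<and> (\<forall>i<length P. \<forall>j<length P. i \<noteq> j \<longrightarrow> P ! i \<inter> P ! j = {})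
   \<and> \<Union> (set P) = E
   \<and> (\<forall>i<length P. k_separating lam k (P ! i)
        \<and> k_separating lam k (P ! i \<union> P ! ((i + 1) mod length P)))"

definition displays :: "'a set list \<Rightarrow> 'a set \<Rightarrow> bool" where
  "displays P X \<longleftrightarrow> (\<exists>I \<subseteq> {..<length P}. X = (\<Union>i\<in>I. P ! i))"

definition flower_le :: "'a set \<Rightarrow> ('a set \<Rightarrow> int) \<Rightarrow> int \<Rightarrow> 'a set set \<Rightarrow> 'a set set
     \<Rightarrow> 'a set list \<Rightarrow> 'a set list \<Rightarrow> bool" where
  "flower_le E lam k T S P1 P2 \<longleftrightarrow>
     (\<forall>X. kS_sep E lam k S X \<longrightarrow> displays P1 X \<longrightarrow>
        (\<exists>X'. kS_sep E lam k S X' \<and> displays P2 X' \<and> T_equiv E lam k T X X'))"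

definition flower_equiv :: "'a set \<Rightarrow> ('a set \<Rightarrow> int) \<Rightarrow> int \<Rightarrow> 'a set set \<Rightarrow> 'a set set
     \<Rightarrow> 'a set list \<Rightarrow> 'a set list \<Rightarrow> bool" where
  "flower_equiv E lam k T S P1 P2 \<longleftrightarrow>
     flower_le E lam k T S P1 P2 \<and> flower_le E lam k T S P2 P1"

definition S_tight :: "'a set \<Rightarrow> ('a set \<Rightarrow> int) \<Rightarrow> int \<Rightarrow> 'a set set \<Rightarrow> 'a set set
     \<Rightarrow> 'a set list \<Rightarrow> bool" where
  "S_tight E lam k T S P \<longleftrightarrow>
     \<not> (\<exists>P'. k_flower E lam k T P' \<and> length P' < length P \<and> flower_equiv E lam k T S P P')"

definition S_maximal :: "'a set \<Rightarrow> ('a set \<Rightarrow> int) \<Rightarrow> int \<Rightarrow> 'a set set \<Rightarrow> 'a set set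
     \<Rightarrow> 'a set list \<Rightarrow> bool" where
  "S_maximal E lam k T S P \<longleftrightarrow>
     (\<forall>P'. k_flower E lam k T P' \<longrightarrow> flower_le E lam k T S P P' \<longrightarrow> flower_le E lam k T S P' P)"

end

theory Submission
  imports Defs
begin

text \<open>Since \<open>E\<close> is finite, the preorder \<open>flower_le\<close> is inclusion of subsets of the finite set
  \<open>Pow E\<close>: a flower is compared with others only through the set of \<open>(k,S)\<close>-separations that are
  \<open>T\<close>-equivalent to one it displays. The two-petal flower \<open>(R, E - R)\<close> displays \<open>R\<close>; among all
  flowers above it pick one whose set is inclusion-maximal, and among the flowers with that same
  set pick one with the fewest petals. It is \<open>S\<close>-maximal by the first choice and \<open>S\<close>-tight by the
  second.\<close>

lemma T_equiv_sym: "T_equiv E lam k T X Y \<Longrightarrow> T_equiv E lam k T Y X"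
  unfolding T_equiv_def by simp

lemma T_equiv_trans:
  "T_equiv E lam k T X Y \<Longrightarrow> T_equiv E lam k T Y Z \<Longrightarrow> T_equiv E lam k T X Z"
  unfolding T_equiv_def by simp

definition equiv_displayed_kS_seps :: "'a set \<Rightarrow> ('a set \<Rightarrow> int) \<Rightarrow> int \<Rightarrow> 'a set set
     \<Rightarrow> 'a set set \<Rightarrow> 'a set list \<Rightarrow> 'a set set" where
  "equiv_displayed_kS_seps E lam k T S P = {X. kS_sep E lam k S X \<and>
      (\<exists>X'. kS_sep E lam k S X' \<and> displays P X' \<and> T_equiv E lam k T X X')}"

lemma equiv_displayed_kS_seps_subset_Pow: "equiv_displayed_kS_seps E lam k T S P \<subseteq> Pow E"
  unfolding equiv_displayed_kS_seps_def kS_sep_def by auto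

lemma flower_le_iff_subset:
  "flower_le E lam k T S P1 P2 \<longleftrightarrow>
     equiv_displayed_kS_seps E lam k T S P1 \<subseteq> equiv_displayed_kS_seps E lam k T S P2"
proof
  assume le: "flower_le E lam k T S P1 P2"
  show "equiv_displayed_kS_seps E lam k T S P1 \<subseteq> equiv_displayed_kS_seps E lam k T S P2"
  proof
    fix X assume "X \<in> equiv_displayed_kS_seps E lam k T S P1"
    then obtain X1 where X: "kS_sep E lam k S X" and X1: "kS_sep E lam k S X1" "displays P1 X1"
      and "T_equiv E lam k T X X1"
      unfolding equiv_displayed_kS_seps_def by blast
    moreover obtain X2 where "kS_sep E lam k S X2" "displays P2 X2" "T_equiv E lam k T X1 X2"
      using le X1 unfolding flower_le_def by blast
    ultimately show "X \<in> equiv_displayed_kS_seps E lam k T S P2"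
      unfolding equiv_displayed_kS_seps_def using T_equiv_trans by blast
  qed
next
  assume "equiv_displayed_kS_seps E lam k T S P1 \<subseteq> equiv_displayed_kS_seps E lam k T S P2"
  then show "flower_le E lam k T S P1 P2"
    unfolding flower_le_def equiv_displayed_kS_seps_def T_equiv_def by blast
qed

lemma flower_equiv_iff_eq:
  "flower_equiv E lam k T S P1 P2 \<longleftrightarrow>
     equiv_displayed_kS_seps E lam k T S P1 = equiv_displayed_kS_seps E lam k T S P2"
  unfolding flower_equiv_def flower_le_iff_subset by blast

lemma ex_maximal_image_in_finite_Pow:
  fixes f :: "'a \<Rightarrow> 'b set"
  assumes "finite A" and "Q x0" and "\<And>x. Q x \<Longrightarrow> f x \<subseteq> A"
  obtains x where "Q x" "f x0 \<subseteq> f x" "\<And>y. Q y \<Longrightarrow> f x \<subseteq> f y \<Longrightarrow> f y = f x"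
proof -
  have "finite (f ` Collect Q)"
    using assms(1,3) by (blast intro: finite_subset[of _ "Pow A"])
  then obtain m where "m \<in> f ` Collect Q" "f x0 \<subseteq> m" "\<forall>b \<in> f ` Collect Q. m \<subseteq> b \<longrightarrow> m = b"
    using finite_has_maximal2[of "f ` Collect Q" "f x0"] assms(2) by blast
  then show thesis using that by fastforce
qed

lemma ex_tight_maximal_flower_above:
  assumes "finite E" and "k_flower E lam k T P0"
  shows "\<exists>P. k_flower E lam k T P \<and> S_tight E lam k T S P \<and> S_maximal E lam k T S P
           \<and> flower_le E lam k T S P0 P"
proof -
  let ?D = "equiv_displayed_kS_seps E lam k T S"
  obtain P1 where P1: "k_flower E lam k T P1" "?D P0 \<subseteq> ?D P1"
    and P1_max: "\<And>P'. k_flower E lam k T P' \<Longrightarrow> ?D P1 \<subseteq> ?D P' \<Longrightarrow> ?D P' = ?D P1"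
    using ex_maximal_image_in_finite_Pow[of "Pow E" "k_flower E lam k T" P0 ?D]
      assms equiv_displayed_kS_seps_subset_Pow by blast
  obtain P where P: "k_flower E lam k T P" "?D P = ?D P1"
    and P_min: "\<And>P'. k_flower E lam k T P' \<Longrightarrow> ?D P' = ?D P1 \<Longrightarrow> length P \<le> length P'"
    using ex_has_least_nat[of "\<lambda>P. k_flower E lam k T P \<and> ?D P = ?D P1" P1 length] P1(1)
    by blast
  have "S_tight E lam k T S P"
    unfolding S_tight_def flower_equiv_iff_eq using P P_min by fastforce
  moreover have "S_maximal E lam k T S P"
    unfolding S_maximal_def flower_le_iff_subset using P P1_max by auto
  moreover have "flower_le E lam k T S P0 P"
    unfolding flower_le_iff_subset using P1(2) P(2) by simp
  ultimately show ?thesis using P(1) by blast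
qed

lemma empty_notin_admissible_S:
  assumes "admissible_S E lam k T S"
  shows "{} \<notin> S"
proof
  assume "{} \<in> S"
  moreover have "fcl E lam k T E = E"
    unfolding fcl_def by auto
  ultimately show False
    using assms unfolding admissible_S_def T_sequential_def by auto
qed

lemma connectivity_system_lam_E_le:
  assumes "connectivity_system E lam" and "X \<subseteq> E"
  shows "lam E \<le> lam X"
proof -
  have "lam (X \<union> (E - X)) + lam (X \<inter> (E - X)) \<le> lam X + lam (E - X)"
    using assms unfolding connectivity_system_def by (meson Diff_subset)
  moreover have "X \<union> (E - X) = E" "X \<inter> (E - X) = {}"
    using assms(2) by auto
  moreover have "lam (E - X) = lam X" "lam E = lam {}"
    using assms unfolding connectivity_system_def by (metis, metis Diff_empty empty_subsetI)
  ultimately show ?thesis by simp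
qed

lemma kS_sep_two_petal_flower:
  assumes "connectivity_system E lam" and "admissible_S E lam k T S" and "kS_sep E lam k S R"
  shows "k_flower E lam k T [R, E - R]"
proof -
  have R: "R \<subseteq> E" "R \<in> S" "E - R \<in> S" "lam R \<le> k"
    using assms(3) unfolding kS_sep_def k_separating_def by auto
  have "R \<noteq> {}" "E - R \<noteq> {}"
    using R empty_notin_admissible_S[OF assms(2)] by auto
  moreover have "T_strong T R" "T_strong T (E - R)"
    using assms(2) R unfolding admissible_S_def by (metis double_diff order_refl)+
  moreover have "lam (E - R) = lam R"
    using assms(1) R(1) unfolding connectivity_system_def by metis
  moreover have "lam E \<le> k" "R \<union> (E - R) = E" "E - R \<union> R = E"
    using connectivity_system_lam_E_le[OF assms(1) R(1)] R by auto
  ultimately show ?thesis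
    unfolding k_flower_def k_separating_def using R by (auto simp: less_Suc_eq nth_Cons')
qed

theorem lemma6p2:
  fixes E :: "'a set" and lam :: "'a set \<Rightarrow> int" and k :: int
    and T :: "'a set set" and S :: "'a set set" and R :: "'a set"
  assumes "connectivity_system E lam"
    and "tangle E lam k T"
    and "tree_compatible E lam k T S"
    and "kS_sep E lam k S R"
  shows "\<exists>P. k_flower E lam k T P \<and> S_tight E lam k T S P \<and> S_maximal E lam k T S P
           \<and> (\<exists>X. kS_sep E lam k S X \<and> displays P X \<and> T_equiv E lam k T X R)"
proof -
  have "admissible_S E lam k T S"
    using assms(3) unfolding tree_compatible_def by blast
  then have "k_flower E lam k T [R, E - R]"
    using kS_sep_two_petal_flower assms(1,4) by blast
  moreover have "finite E"
    using assms(1) unfolding connectivity_system_def by blast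
  ultimately obtain P where P: "k_flower E lam k T P" "S_tight E lam k T S P"
      "S_maximal E lam k T S P" "flower_le E lam k T S [R, E - R] P"
    using ex_tight_maximal_flower_above by blast
  have "displays [R, E - R] R"
    unfolding displays_def by (rule exI[of _ "{0}"]) auto
  then obtain X where "kS_sep E lam k S X" "displays P X" "T_equiv E lam k T R X"
    using P(4) assms(4) unfolding flower_le_def by blast
  then show ?thesis
    using P(1-3) T_equiv_sym by blast
qed

end
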